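(* Let $x,y\ge 1$, $n\ge\max(x,y)$, and let $G$ be a minimal $(x,y)$ task-dependency graph of order $n$. Then $G$ has the maximum possible number of edges among all minimal $(x,y)$ task-dependency graphs of order $n$ if and only if $G$ has at most two components that are not isolated vertices, and (1) if $G$ consists of all isolated vertices, then $n=x=y$; (2) if $G$ has two components that are not isolated vertices, then $G$ has no interior vertex; and (3) if $G$ has exactly one component $C$ that is not an isolated vertex, then either (a) $C$ has no interior vertex; (b) there exist an initial vertex $u$, a terminal vertex $v$, and multiple interior vertices in $C$ such that all interior vertices of $C$ are adjacent to both $u$ and $v$, where $u$ may be adjacent to more terminal vertices and $v$ may be adjacent to more initial vertices; or (c) $C$ has exactly one interior vertex, which is adjacent to $p>0$ initial vertices and $q>0$ terminal vertices; if $p=1$ this initial vertex may be adjacent to more terminal vertices; if $q=1$ this terminal vertex may be adjacent to more initial vertices; if $p>1$ these initial vertices are adjacent only to the interior vertex; if $q>1$ these terminal vertices are adjacent only to the interior vertex.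
   Context: A task-dependency graph is a finite directed acyclic graph (no loops, no multiple edges). A vertex is initial if it has in-degree $0$, terminal if it has out-degree $0$ (an isolated vertex is both), exterior if it is initial or terminal, and interior otherwise. An $(x,y)$ task-dependency graph has exactly $x$ initial and $y$ terminal vertices; it is minimal if removing any single edge produces a graph that is not an $(x,y)$ task-dependency graph. Components are connected components of the underlying undirected graph; two vertices are adjacent if there is an edge between them in either direction. The order is the number of vertices. *)

theory Defs
  imports Main
begin

definition tdg :: "'a set \<Rightarrow> ('a \<times> 'a) set \<Rightarrow> bool" where
  "tdg V E \<longleftrightarrow> finite V \<and> E \<subseteq> V \<times> V \<and> acyclic E"

definition initial :: "'a set \<Rightarrow> ('a \<times> 'a) set \<Rightarrow> 'a \<Rightarrow> bool" where
  "initial V E v \<longleftrightarrow> v \<in> V \<and> (\<forall>u. (u, v) \<notin> E)"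

definition terminal :: "'a set \<Rightarrow> ('a \<times> 'a) set \<Rightarrow> 'a \<Rightarrow> bool" where
  "terminal V E v \<longleftrightarrow> v \<in> V \<and> (\<forall>u. (v, u) \<notin> E)"

definition interior :: "'a set \<Rightarrow> ('a \<times> 'a) set \<Rightarrow> 'a \<Rightarrow> bool" where
  "interior V E v \<longleftrightarrow> v \<in> V \<and> \<not> initial V E v \<and> \<not> terminal V E v"

definition xy_tdg :: "nat \<Rightarrow> nat \<Rightarrow> 'a set \<Rightarrow> ('a \<times> 'a) set \<Rightarrow> bool" where
  "xy_tdg x y V E \<longleftrightarrow> tdg V E \<and> card {v \<in> V. initial V E v} = x
      \<and> card {v \<in> V. terminal V E v} = y"

definition minimal_xy_tdg :: "nat \<Rightarrow> nat \<Rightarrow> 'a set \<Rightarrow> ('a \<times> 'a) set \<Rightarrow> bool" where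
  "minimal_xy_tdg x y V E \<longleftrightarrow> xy_tdg x y V E \<and> (\<forall>e \<in> E. \<not> xy_tdg x y V (E - {e}))"

definition adj :: "('a \<times> 'a) set \<Rightarrow> 'a \<Rightarrow> 'a \<Rightarrow> bool" where
  "adj E u v \<longleftrightarrow> (u, v) \<in> E \<or> (v, u) \<in> E"

definition components :: "'a set \<Rightarrow> ('a \<times> 'a) set \<Rightarrow> 'a set set" where
  "components V E = {C. \<exists>v \<in> V. C = {u \<in> V. (v, u) \<in> {(a, b). adj E a b}\<^sup>*}}"

text \<open>Components that are not isolated vertices (i.e. have at least two vertices).\<close>
definition nontriv_components :: "'a set \<Rightarrow> ('a \<times> 'a) set \<Rightarrow> 'a set set" where
  "nontriv_components V E = {C \<in> components V E. card C \<ge> 2}"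

end

(*
  In a minimal (x, y) task-dependency graph every edge (u, v) has u of out-degree 1 or v of
  in-degree 1. Counting the edges once by their tails of out-degree 1 and once by their heads of
  in-degree 1 gives |E| + d = 2n - x - y, where the defect d is the number of forks (out-degree
  at least 2), joins (in-degree at least 2) and bridges (edges from out-degree 1 to in-degree 1).
  So maximising |E| means minimising d. If n >= x + 2 and n >= y + 2 then d >= 2 always, and a
  graph with one fork and one join attains d = 2; otherwise d is forced to be n - x or n - y,
  which is at most 1. Hence G is edge-maximal iff d <= 2.

  The structure theorem then characterises d <= 2. Every non-trivial component carries a defect,
  and an interior vertex needs one defect for an incoming and a different one for an outgoing
  edge. Conversely |E| >= n - #components yields d <= #interior + #non-trivial components, and
  in the case of two or more interior vertices sharing a source u and a sink v, every edge
  starts at u or ends at v, so the fork u and the join v are the only defects.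
*)

theory Submission
  imports Defs
begin

definition succs :: "('a \<times> 'a) set \<Rightarrow> 'a \<Rightarrow> 'a set" where
  "succs E v = {w. (v, w) \<in> E}"

definition preds :: "('a \<times> 'a) set \<Rightarrow> 'a \<Rightarrow> 'a set" where
  "preds E v = {u. (u, v) \<in> E}"

definition forks :: "'a set \<Rightarrow> ('a \<times> 'a) set \<Rightarrow> 'a set" where
  "forks V E = {v \<in> V. 2 \<le> card (succs E v)}"

definition joins :: "'a set \<Rightarrow> ('a \<times> 'a) set \<Rightarrow> 'a set" where
  "joins V E = {v \<in> V. 2 \<le> card (preds E v)}"

definition bridges :: "('a \<times> 'a) set \<Rightarrow> ('a \<times> 'a) set" where
  "bridges E = {(u, v) \<in> E. card (succs E u) = 1 \<and> card (preds E v) = 1}"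

datatype 'a defect = Bridge 'a 'a | Fork 'a | Join 'a

definition defects :: "'a set \<Rightarrow> ('a \<times> 'a) set \<Rightarrow> 'a defect set" where
  "defects V E = case_prod Bridge ` bridges E \<union> Fork ` forks V E \<union> Join ` joins V E"

lemma tdg_edgeD: "tdg V E \<Longrightarrow> (u, v) \<in> E \<Longrightarrow> u \<in> V \<and> v \<in> V"
  unfolding tdg_def by auto

lemma tdg_finite_edges: "tdg V E \<Longrightarrow> finite E"
  unfolding tdg_def by (meson finite_SigmaI finite_subset)

lemma tdg_irrefl: "tdg V E \<Longrightarrow> (v, v) \<notin> E"
  unfolding tdg_def acyclic_def by auto

lemma tdg_asym: "tdg V E \<Longrightarrow> (u, v) \<in> E \<Longrightarrow> (v, u) \<notin> E"
  unfolding tdg_def acyclic_def by (meson trancl.r_into_trancl trancl_into_trancl)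

lemma finite_succs: "tdg V E \<Longrightarrow> finite (succs E v)"
  unfolding tdg_def succs_def by (auto intro: finite_subset)

lemma finite_preds: "tdg V E \<Longrightarrow> finite (preds E v)"
  unfolding tdg_def preds_def by (auto intro: finite_subset)

lemma two_le_card_succs:
  "tdg V E \<Longrightarrow> (u, w1) \<in> E \<Longrightarrow> (u, w2) \<in> E \<Longrightarrow> w1 \<noteq> w2 \<Longrightarrow> 2 \<le> card (succs E u)"
  using card_mono[OF finite_succs, of V E "{w1, w2}" u] unfolding succs_def by auto

lemma two_le_card_preds:
  "tdg V E \<Longrightarrow> (w1, v) \<in> E \<Longrightarrow> (w2, v) \<in> E \<Longrightarrow> w1 \<noteq> w2 \<Longrightarrow> 2 \<le> card (preds E v)"
  using card_mono[OF finite_preds, of V E "{w1, w2}" v] unfolding preds_def by auto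

lemma initial_iff_preds: "initial V E v \<longleftrightarrow> v \<in> V \<and> preds E v = {}"
  unfolding initial_def preds_def by auto

lemma terminal_iff_succs: "terminal V E v \<longleftrightarrow> v \<in> V \<and> succs E v = {}"
  unfolding terminal_def succs_def by auto

lemma finite_defects: "tdg V E \<Longrightarrow> finite (defects V E)"
  using tdg_finite_edges[of V E]
  unfolding defects_def bridges_def forks_def joins_def tdg_def
  by (auto intro: rev_finite_subset)

lemma card_defects:
  assumes "tdg V E"
  shows "card (defects V E) = card (bridges E) + card (forks V E) + card (joins V E)"
proof -
  have fin: "finite (bridges E)" "finite (forks V E)" "finite (joins V E)"
    using assms tdg_finite_edges[OF assms] unfolding tdg_def bridges_def forks_def joins_def
    by (auto intro: rev_finite_subset)
  have "card (defects V E) = card (case_prod Bridge ` bridges E \<union> Fork ` forks V E)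
      + card (Join ` joins V E)"
    unfolding defects_def using fin by (intro card_Un_disjoint) auto
  moreover have "card (case_prod Bridge ` bridges E \<union> Fork ` forks V E)
      = card (case_prod Bridge ` bridges E) + card (Fork ` forks V E)"
    using fin by (intro card_Un_disjoint) auto
  moreover have "card (case_prod Bridge ` bridges E) = card (bridges E)"
    by (rule card_image) (auto simp: inj_on_def)
  ultimately show ?thesis
    by (simp add: card_image inj_on_def)
qed

section \<open>Reversal\<close>

lemma succs_converse [simp]: "succs (E\<inverse>) = preds E"
  unfolding succs_def preds_def by auto

lemma preds_converse [simp]: "preds (E\<inverse>) = succs E"
  unfolding succs_def preds_def by auto

lemma initial_converse [simp]: "initial V (E\<inverse>) = terminal V E"
  unfolding initial_def terminal_def by auto

lemma terminal_converse [simp]: "terminal V (E\<inverse>) = initial V E"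
  unfolding initial_def terminal_def by auto

lemma tdg_converse [simp]: "tdg V (E\<inverse>) \<longleftrightarrow> tdg V E"
  unfolding tdg_def by auto

lemma forks_converse [simp]: "forks V (E\<inverse>) = joins V E"
  unfolding forks_def joins_def by simp

lemma joins_converse [simp]: "joins V (E\<inverse>) = forks V E"
  unfolding forks_def joins_def by simp

lemma bridges_converse [simp]: "bridges (E\<inverse>) = (bridges E)\<inverse>"
  unfolding bridges_def by auto

lemma card_defects_converse: "tdg V E \<Longrightarrow> card (defects V (E\<inverse>)) = card (defects V E)"
  by (simp add: card_defects)

lemma adj_converse [simp]: "adj (E\<inverse>) = adj E"
  unfolding adj_def by auto

lemma interior_converse [simp]: "interior V (E\<inverse>) = interior V E"
  unfolding interior_def by auto

section \<open>Counting edges of minimal graphs\<close>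

lemma card_eq_iff_eq_superset:
  "finite B \<Longrightarrow> A \<subseteq> B \<Longrightarrow> card B = card A \<longleftrightarrow> B = A"
  using card_subset_eq by metis

lemma minimal_xy_tdg_iff:
  assumes xy: "xy_tdg x y V E"
  shows "minimal_xy_tdg x y V E \<longleftrightarrow>
    (\<forall>(u, v) \<in> E. card (succs E u) = 1 \<or> card (preds E v) = 1)"
proof -
  have t: "tdg V E" and fV: "finite V" and cx: "card {v \<in> V. initial V E v} = x"
    and cy: "card {v \<in> V. terminal V E v} = y"
    using xy unfolding xy_tdg_def tdg_def by auto
  have "xy_tdg x y V (E - {(u, v)}) \<longleftrightarrow> \<not> (card (succs E u) = 1 \<or> card (preds E v) = 1)"
    if e: "(u, v) \<in> E" for u v
  proof -
    let ?F = "E - {(u, v)}"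
    have tF: "tdg V ?F" using t unfolding tdg_def by (auto intro: acyclic_subset)
    have uv: "u \<in> preds E v" "v \<in> succs E u" "u \<in> V" "v \<in> V"
      using e tdg_edgeD[OF t e] unfolding succs_def preds_def by auto
    have "{w \<in> V. initial V ?F w} = {w \<in> V. initial V E w} \<union> {w. w = v \<and> preds E v \<subseteq> {u}}"
      using uv unfolding initial_def preds_def by auto
    moreover have "\<not> initial V E v" using uv by (auto simp: initial_iff_preds)
    ultimately have I: "card {w \<in> V. initial V ?F w} = x \<longleftrightarrow> preds E v \<noteq> {u}"
      using uv fV cx card_eq_iff_eq_superset[of "{w \<in> V. initial V ?F w}"] by auto
    have "{w \<in> V. terminal V ?F w} = {w \<in> V. terminal V E w} \<union> {w. w = u \<and> succs E u \<subseteq> {v}}"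
      using uv unfolding terminal_def succs_def by auto
    moreover have "\<not> terminal V E u" using uv by (auto simp: terminal_iff_succs)
    ultimately have T: "card {w \<in> V. terminal V ?F w} = y \<longleftrightarrow> succs E u \<noteq> {v}"
      using uv fV cy card_eq_iff_eq_superset[of "{w \<in> V. terminal V ?F w}"] by auto
    show ?thesis
      using tF I T uv unfolding xy_tdg_def by (auto simp: card_1_singleton_iff)
  qed
  then show ?thesis using xy unfolding minimal_xy_tdg_def by auto
qed

lemma minimal_xy_tdgD:
  "minimal_xy_tdg x y V E \<Longrightarrow> (u, v) \<in> E \<Longrightarrow> card (succs E u) = 1 \<or> card (preds E v) = 1"
  using minimal_xy_tdg_iff unfolding minimal_xy_tdg_def by fast

lemma minimal_xy_tdg_converse:
  assumes "minimal_xy_tdg x y V E"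
  shows "minimal_xy_tdg y x V (E\<inverse>)"
proof -
  have "xy_tdg y x V (E\<inverse>)" using assms unfolding minimal_xy_tdg_def xy_tdg_def by simp
  then show ?thesis using minimal_xy_tdgD[OF assms] by (auto simp: minimal_xy_tdg_iff)
qed

lemma card_edges_out_degree_one:
  assumes t: "tdg V E"
  shows "card {(u, v) \<in> E. card (succs E u) = 1} + card (forks V E)
    + card {v \<in> V. terminal V E v} = card V"
proof -
  let ?U = "{u \<in> V. card (succs E u) = 1}" and ?T = "{v \<in> V. terminal V E v}"
  have fV: "finite V" and sub: "E \<subseteq> V \<times> V" using t unfolding tdg_def by auto
  have "{(u, v) \<in> E. card (succs E u) = 1} = Sigma ?U (succs E)"
    using sub unfolding succs_def by auto
  then have "card {(u, v) \<in> E. card (succs E u) = 1} = card ?U"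
    using fV finite_succs[OF t] by simp
  moreover have "card V = card ?U + card (forks V E) + card ?T"
  proof -
    have "terminal V E v \<longleftrightarrow> card (succs E v) = 0" if "v \<in> V" for v
      using that finite_succs[OF t] by (simp add: terminal_iff_succs)
    then have "(?U \<union> forks V E) \<union> ?T = V" "(?U \<union> forks V E) \<inter> ?T = {}"
      "?U \<inter> forks V E = {}"
      unfolding forks_def by auto
    moreover have "finite ?U" "finite (forks V E)" "finite ?T" using fV unfolding forks_def by auto
    ultimately show ?thesis
      using card_Un_disjoint[of "?U \<union> forks V E" ?T] card_Un_disjoint[of ?U "forks V E"] by simp
  qed
  ultimately show ?thesis by simp
qed

lemma minimal_edge_count:
  assumes m: "minimal_xy_tdg x y V E"
  shows "card E + card (defects V E) + x + y = 2 * card V"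
proof -
  have t: "tdg V E" and cx: "card {v \<in> V. initial V E v} = x"
    and cy: "card {v \<in> V. terminal V E v} = y"
    using m unfolding minimal_xy_tdg_def xy_tdg_def by auto
  let ?E1 = "{(u, v) \<in> E. card (succs E u) = 1}" and ?E2 = "{(u, v) \<in> E. card (preds E v) = 1}"
  have "?E1 \<union> ?E2 = E" using minimal_xy_tdgD[OF m] by auto
  moreover have "?E1 \<inter> ?E2 = bridges E" unfolding bridges_def by auto
  moreover have "finite ?E1" "finite ?E2"
    using tdg_finite_edges[OF t] by (auto intro: rev_finite_subset)
  ultimately have "card E + card (bridges E) = card ?E1 + card ?E2"
    using card_Un_Int[of ?E1 ?E2] by simp
  moreover have "card ?E1 + card (forks V E) + y = card V"
    using card_edges_out_degree_one[OF t] cy by simp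
  moreover have "?E2 = {(u, v) \<in> E\<inverse>. card (succs (E\<inverse>) u) = 1}\<inverse>" by auto
  then have "card ?E2 + card (joins V E) + x = card V"
    using card_edges_out_degree_one[of V "E\<inverse>"] t cx by simp
  ultimately show ?thesis using card_defects[OF t] by simp
qed

lemma card_defects_no_forks:
  assumes m: "minimal_xy_tdg x y V E" and no_forks: "forks V E = {}"
  shows "card (defects V E) + x = card V"
proof -
  have t: "tdg V E" and cy: "card {v \<in> V. terminal V E v} = y"
    using m unfolding minimal_xy_tdg_def xy_tdg_def by auto
  have "card (succs E u) = 1" if "(u, v) \<in> E" for u v
  proof -
    have "0 < card (succs E u)"
      using that finite_succs[OF t] by (auto simp: card_gt_0_iff succs_def)
    moreover have "\<not> 2 \<le> card (succs E u)"
      using no_forks tdg_edgeD[OF t that] unfolding forks_def by auto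
    ultimately show ?thesis by linarith
  qed
  then have "{(u, v) \<in> E. card (succs E u) = 1} = E" by auto
  then show ?thesis
    using card_edges_out_degree_one[OF t] minimal_edge_count[OF m] no_forks cy by simp
qed

lemma card_defects_no_joins:
  assumes "minimal_xy_tdg x y V E" and "joins V E = {}"
  shows "card (defects V E) + y = card V"
  using card_defects_no_forks[OF minimal_xy_tdg_converse[OF assms(1)]] assms
    card_defects_converse[of V E]
  unfolding minimal_xy_tdg_def xy_tdg_def by simp

lemma two_le_card_defects:
  assumes m: "minimal_xy_tdg x y V E" and "x + 2 \<le> card V" and "y + 2 \<le> card V"
  shows "2 \<le> card (defects V E)"
proof -
  have t: "tdg V E" using m unfolding minimal_xy_tdg_def xy_tdg_def by auto
  have fin: "finite (forks V E)" "finite (joins V E)"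
    using t unfolding tdg_def forks_def joins_def by auto
  consider "forks V E = {}" | "joins V E = {}" | "forks V E \<noteq> {}" "joins V E \<noteq> {}" by blast
  then show ?thesis
  proof cases
    case 1
    then show ?thesis using card_defects_no_forks[OF m] assms(2) by simp
  next
    case 2
    then show ?thesis using card_defects_no_joins[OF m] assms(3) by simp
  next
    case 3
    then have "1 \<le> card (forks V E)" "1 \<le> card (joins V E)"
      using fin by (auto simp: Suc_le_eq card_gt_0_iff)
    then show ?thesis using card_defects[OF t] by simp
  qed
qed

lemma card_defects_few_noninitial:
  assumes m: "minimal_xy_tdg x y V E" and small: "card V \<le> x + 1"
  shows "card (defects V E) + x = card V"
proof -
  have t: "tdg V E" and fV: "finite V" and cx: "card {v \<in> V. initial V E v} = x"
    using m unfolding minimal_xy_tdg_def xy_tdg_def tdg_def by auto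
  have "card (succs E u) \<le> card (V - {v \<in> V. initial V E v})" for u
    using fV tdg_edgeD[OF t] by (intro card_mono) (auto simp: succs_def initial_def)
  moreover have "card (V - {v \<in> V. initial V E v}) \<le> 1"
    using cx small fV by (simp add: card_Diff_subset)
  ultimately have "\<not> 2 \<le> card (succs E u)" for u
    using le_trans by fastforce
  then have "forks V E = {}" unfolding forks_def by auto
  then show ?thesis by (rule card_defects_no_forks[OF m])
qed

lemma card_defects_few_nonterminal:
  assumes "minimal_xy_tdg x y V E" and "card V \<le> y + 1"
  shows "card (defects V E) + y = card V"
  using card_defects_few_noninitial[OF minimal_xy_tdg_converse[OF assms(1)]] assms
    card_defects_converse[of V E]
  unfolding minimal_xy_tdg_def xy_tdg_def by simp

section \<open>Components\<close>

definition component :: "'a set \<Rightarrow> ('a \<times> 'a) set \<Rightarrow> 'a \<Rightarrow> 'a set" where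
  "component V E v = {u \<in> V. (v, u) \<in> {(a, b). adj E a b}\<^sup>*}"

definition isolated :: "('a \<times> 'a) set \<Rightarrow> 'a \<Rightarrow> bool" where
  "isolated E v \<longleftrightarrow> (\<forall>z. \<not> adj E v z)"

lemma components_eq_image: "components V E = component V E ` V"
  unfolding components_def component_def by auto

lemma component_self: "v \<in> V \<Longrightarrow> v \<in> component V E v"
  unfolding component_def by auto

lemma component_eq:
  assumes "u \<in> component V E v"
  shows "component V E u = component V E v"
proof -
  have "sym {(a, b). adj E a b}" unfolding adj_def sym_def by auto
  then have "sym ({(a, b). adj E a b}\<^sup>*)" by (rule sym_rtrancl)
  then show ?thesis
    using assms unfolding component_def by (auto dest: symD intro: rtrancl_trans)
qed

lemma component_adj_closed:
  "E \<subseteq> V \<times> V \<Longrightarrow> u \<in> component V E v \<Longrightarrow> adj E u z \<Longrightarrow> z \<in> component V E v"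
  unfolding component_def adj_def by (auto intro: rtrancl_into_rtrancl)

lemma component_subset_closed:
  assumes closed: "\<And>p z. p \<in> S \<Longrightarrow> adj E p z \<Longrightarrow> z \<in> S" and "v \<in> S"
  shows "component V E v \<subseteq> S"
proof
  fix u assume "u \<in> component V E v"
  then have "(v, u) \<in> {(a, b). adj E a b}\<^sup>*" unfolding component_def by auto
  then show "u \<in> S" by induction (use \<open>v \<in> S\<close> closed in auto)
qed

lemma component_isolated: "v \<in> V \<Longrightarrow> isolated E v \<Longrightarrow> component V E v = {v}"
  using component_subset_closed[of "{v}" E v V] component_self[of v V E]
  unfolding isolated_def by auto

lemma component_not_isolated:
  assumes t: "tdg V E" and "v \<in> V" and "\<not> isolated E v"
  shows "2 \<le> card (component V E v)"
proof -
  obtain z where z: "adj E v z" using assms(3) unfolding isolated_def by auto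
  have "E \<subseteq> V \<times> V" "finite V" using t unfolding tdg_def by auto
  then have "z \<in> component V E v" "finite (component V E v)"
    using component_adj_closed[OF _ component_self[OF \<open>v \<in> V\<close>] z] unfolding component_def by auto
  moreover have "z \<noteq> v" using z tdg_irrefl[OF t] unfolding adj_def by auto
  ultimately have "card {v, z} \<le> card (component V E v)"
    using component_self[OF \<open>v \<in> V\<close>] by (intro card_mono) auto
  then show ?thesis using \<open>z \<noteq> v\<close> by simp
qed

lemma nontriv_components_eq:
  assumes "tdg V E"
  shows "nontriv_components V E = component V E ` {v \<in> V. \<not> isolated E v}"
  using component_isolated component_not_isolated[OF assms]
  unfolding nontriv_components_def components_eq_image by fastforce

lemma nontriv_component_eq:
  "K \<in> nontriv_components V E \<Longrightarrow> v \<in> K \<Longrightarrow> K = component V E v"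
  unfolding nontriv_components_def components_eq_image by (auto dest: component_eq)

lemma edge_in_nontriv_component:
  assumes "tdg V E" and "nontriv_components V E = {C}" and "adj E v z"
  shows "v \<in> C"
proof -
  have "v \<in> V" using assms(3) tdg_edgeD[OF assms(1)] unfolding adj_def by auto
  moreover have "\<not> isolated E v" using assms(3) unfolding isolated_def by auto
  then have "component V E v \<in> nontriv_components V E"
    using \<open>v \<in> V\<close> nontriv_components_eq[OF assms(1)] by auto
  then show ?thesis using assms(2) component_self[OF \<open>v \<in> V\<close>] by auto
qed

lemma card_components:
  assumes t: "tdg V E"
  shows "card (components V E) = card (nontriv_components V E) + card {v \<in> V. isolated E v}"
proof -
  let ?I = "{v \<in> V. isolated E v}"
  have "finite V" using t unfolding tdg_def by auto
  have "V = {v \<in> V. \<not> isolated E v} \<union> ?I" by auto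
  then have "component V E ` V = component V E ` {v \<in> V. \<not> isolated E v} \<union> component V E ` ?I"
    by (metis image_Un)
  also have "component V E ` ?I = (\<lambda>v. {v}) ` ?I"
    by (rule image_cong[OF refl]) (simp add: component_isolated)
  finally have "components V E = nontriv_components V E \<union> (\<lambda>v. {v}) ` ?I"
    using nontriv_components_eq[OF t] unfolding components_eq_image by simp
  moreover have "nontriv_components V E \<inter> (\<lambda>v. {v}) ` ?I = {}"
    unfolding nontriv_components_def by auto
  moreover have "card ((\<lambda>v. {v}) ` ?I) = card ?I" by (rule card_image) (auto simp: inj_on_def)
  moreover have "finite (nontriv_components V E)" "finite ((\<lambda>v. {v}) ` ?I)"
    using \<open>finite V\<close> nontriv_components_eq[OF t] by auto
  ultimately show ?thesis by (simp add: card_Un_disjoint)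
qed

lemma component_insert_edge_other:
  assumes sub: "insert (a, b) F \<subseteq> V \<times> V" and v: "v \<in> V"
    and a: "a \<notin> component V F v" and b: "b \<notin> component V F v"
  shows "component V (insert (a, b) F) v = component V F v"
proof
  show "component V (insert (a, b) F) v \<subseteq> component V F v"
  proof (rule component_subset_closed)
    fix p z assume p: "p \<in> component V F v" and pz: "adj (insert (a, b) F) p z"
    then have "adj F p z" using a b unfolding adj_def by auto
    then show "z \<in> component V F v" using component_adj_closed[OF _ p] sub by auto
  qed (rule component_self[OF v])
  have "{(p, q). adj F p q} \<subseteq> {(p, q). adj (insert (a, b) F) p q}" unfolding adj_def by auto
  then show "component V F v \<subseteq> component V (insert (a, b) F) v"
    unfolding component_def by (auto dest: rtrancl_mono)
qed

lemma card_components_insert_edge: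
  assumes fV: "finite V" and sub: "insert (a, b) F \<subseteq> V \<times> V"
  shows "card (components V F) \<le> card (components V (insert (a, b) F)) + 1"
proof -
  let ?c = "component V F" and ?c' = "component V (insert (a, b) F)"
  have ab: "a \<in> V" "b \<in> V" using sub by auto
  \<comment> \<open>Only the components of \<open>a\<close> and \<open>b\<close> change, and they merge into \<open>?c' a\<close>.\<close>
  have "components V F - {?c a, ?c b} \<subseteq> components V (insert (a, b) F) - {?c' a}"
  proof
    fix K assume "K \<in> components V F - {?c a, ?c b}"
    then obtain v where v: "v \<in> V" "K = ?c v" "K \<noteq> ?c a" "K \<noteq> ?c b"
      unfolding components_eq_image by auto
    then have "a \<notin> ?c v" "b \<notin> ?c v" using component_eq by metis+
    then have "?c' v = K" using component_insert_edge_other[OF sub v(1)] v(2) by simp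
    moreover have "a \<in> ?c' a" "a \<notin> K" using component_self[OF ab(1)] \<open>a \<notin> ?c v\<close> v(2) by auto
    ultimately show "K \<in> components V (insert (a, b) F) - {?c' a}"
      using v(1) unfolding components_eq_image by auto
  qed
  moreover have "finite (components V (insert (a, b) F))" "?c' a \<in> components V (insert (a, b) F)"
    using fV ab(1) unfolding components_eq_image by auto
  ultimately have "card (components V F - {?c a, ?c b}) < card (components V (insert (a, b) F))"
    by (meson card_Diff1_less card_mono finite_Diff order_le_less_trans)
  moreover have "card (components V F) \<le> card (components V F - {?c a, ?c b}) + card {?c a, ?c b}"
    using diff_card_le_card_Diff[of "{?c a, ?c b}" "components V F"] by simp
  moreover have "card {?c a, ?c b} \<le> 2" by (simp add: card_insert_if)
  ultimately show ?thesis by linarith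
qed

lemma card_le_components_plus_edges:
  assumes fV: "finite V" and fE: "finite E" and sub: "E \<subseteq> V \<times> V"
  shows "card V \<le> card (components V E) + card E"
  using fE sub
proof (induction E rule: finite_subset_induct')
  case empty
  have "components V {} = (\<lambda>v. {v}) ` V"
    unfolding components_eq_image
    by (rule image_cong[OF refl]) (simp add: component_isolated isolated_def adj_def)
  moreover have "card ((\<lambda>v. {v}) ` V) = card V" by (rule card_image) (auto simp: inj_on_def)
  ultimately show ?case by simp
next
  case (insert e F)
  obtain a b where "e = (a, b)" by force
  then show ?case
    using insert card_components_insert_edge[OF fV, of a b F] by auto
qed

lemma card_vertices_isolated_interior:
  assumes xy: "xy_tdg x y V E"
  shows "card V + card {v \<in> V. isolated E v} = x + y + card {v \<in> V. interior V E v}"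
proof -
  let ?I = "{v \<in> V. initial V E v}" and ?T = "{v \<in> V. terminal V E v}"
  have fV: "finite V" and cx: "card ?I = x" and cy: "card ?T = y"
    using xy unfolding xy_tdg_def tdg_def by auto
  have "?I \<inter> ?T = {v \<in> V. isolated E v}"
    unfolding isolated_def initial_def terminal_def adj_def by auto
  moreover have "card (?I \<union> ?T) + card (?I \<inter> ?T) = x + y"
    using card_Un_Int[of ?I ?T] fV cx cy by simp
  moreover have "(?I \<union> ?T) \<union> {v \<in> V. interior V E v} = V"
    and "(?I \<union> ?T) \<inter> {v \<in> V. interior V E v} = {}"
    unfolding interior_def by auto
  then have "card V = card (?I \<union> ?T) + card {v \<in> V. interior V E v}"
    using fV card_Un_disjoint[of "?I \<union> ?T" "{v \<in> V. interior V E v}"] by simp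
  ultimately show ?thesis by simp
qed

lemma card_defects_le_interior_plus_components:
  assumes m: "minimal_xy_tdg x y V E"
  shows "card (defects V E) \<le> card {v \<in> V. interior V E v} + card (nontriv_components V E)"
proof -
  have xy: "xy_tdg x y V E" and t: "tdg V E" using m unfolding minimal_xy_tdg_def xy_tdg_def by auto
  have "card V \<le> card (components V E) + card E"
    using t tdg_finite_edges[OF t] by (intro card_le_components_plus_edges) (auto simp: tdg_def)
  then show ?thesis
    using minimal_edge_count[OF m] card_components[OF t] card_vertices_isolated_interior[OF xy] by linarith
qed

lemma interior_component_nontriv:
  assumes t: "tdg V E" and w: "interior V E w"
  shows "component V E w \<in> nontriv_components V E"
proof -
  obtain p where "(p, w) \<in> E" using w unfolding interior_def initial_def by auto
  then show ?thesis
    using w nontriv_components_eq[OF t] unfolding interior_def isolated_def adj_def by blast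
qed

lemma interior_in_nontriv_component:
  assumes "tdg V E" and "nontriv_components V E = {C}" and "interior V E w"
  shows "w \<in> C"
proof -
  obtain p where "(p, w) \<in> E" using assms(3) unfolding interior_def initial_def by auto
  then show ?thesis using edge_in_nontriv_component[OF assms(1,2)] unfolding adj_def by blast
qed

section \<open>Defects and the shape of the graph\<close>

fun defect_vertex :: "'a defect \<Rightarrow> 'a" where
  "defect_vertex (Bridge u v) = u"
| "defect_vertex (Fork u) = u"
| "defect_vertex (Join v) = v"

text \<open>An edge \<open>(u, w)\<close> is always accounted for by a defect in
  \<open>out_defects E u \<inter> in_defects E w\<close>: the fork \<open>u\<close>, the join \<open>w\<close>, or the bridge \<open>(u, w)\<close>.\<close>

definition in_defects :: "('a \<times> 'a) set \<Rightarrow> 'a \<Rightarrow> 'a defect set" where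
  "in_defects E w = insert (Join w) ({Bridge u w | u. (u, w) \<in> E} \<union> {Fork u | u. (u, w) \<in> E})"

definition out_defects :: "('a \<times> 'a) set \<Rightarrow> 'a \<Rightarrow> 'a defect set" where
  "out_defects E w = insert (Fork w) ({Bridge w v | v. (w, v) \<in> E} \<union> {Join v | v. (w, v) \<in> E})"

lemma edge_defect:
  assumes t: "tdg V E" and e: "(u, w) \<in> E"
  shows "\<exists>d \<in> defects V E. d \<in> out_defects E u \<and> d \<in> in_defects E w"
proof -
  have V: "u \<in> V" "w \<in> V" using tdg_edgeD[OF t e] by auto
  have "0 < card (succs E u)" "0 < card (preds E w)"
    using e finite_succs[OF t] finite_preds[OF t] by (auto simp: card_gt_0_iff succs_def preds_def)
  then consider "2 \<le> card (succs E u)" | "2 \<le> card (preds E w)"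
    | "card (succs E u) = 1" "card (preds E w) = 1" by linarith
  then show ?thesis
  proof cases
    case 1
    then have "Fork u \<in> defects V E" using V unfolding defects_def forks_def by auto
    then show ?thesis using e unfolding in_defects_def out_defects_def by auto
  next
    case 2
    then have "Join w \<in> defects V E" using V unfolding defects_def joins_def by auto
    then show ?thesis using e unfolding in_defects_def out_defects_def by auto
  next
    case 3
    then have "Bridge u w \<in> defects V E" using e unfolding defects_def bridges_def by force
    then show ?thesis using e unfolding in_defects_def out_defects_def by auto
  qed
qed

lemma out_in_defects_edge: "d \<in> out_defects E u \<Longrightarrow> d \<in> in_defects E w \<Longrightarrow> (u, w) \<in> E"
  unfolding in_defects_def out_defects_def by auto

lemma in_defects_shared:
  "w \<noteq> w' \<Longrightarrow> d \<in> in_defects E w \<Longrightarrow> d \<in> in_defects E w' \<Longrightarrow>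
    \<exists>u. d = Fork u \<and> (u, w) \<in> E \<and> (u, w') \<in> E"
  unfolding in_defects_def by auto

lemma out_defects_shared:
  "w \<noteq> w' \<Longrightarrow> d \<in> out_defects E w \<Longrightarrow> d \<in> out_defects E w' \<Longrightarrow>
    \<exists>v. d = Join v \<and> (w, v) \<in> E \<and> (w', v) \<in> E"
  unfolding out_defects_def by auto

lemma Fork_in_defects: "Fork u \<in> in_defects E w \<Longrightarrow> (u, w) \<in> E"
  unfolding in_defects_def by auto

lemma Join_out_defects: "Join v \<in> out_defects E w \<Longrightarrow> (w, v) \<in> E"
  unfolding out_defects_def by auto

lemma defect_vertex_in_component:
  assumes t: "tdg V E" and w: "w \<in> V" and d: "d \<in> in_defects E w \<union> out_defects E w"
  shows "defect_vertex d \<in> component V E w"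
proof -
  have "defect_vertex d = w \<or> adj E w (defect_vertex d)"
    using d unfolding in_defects_def out_defects_def adj_def by auto
  moreover have "E \<subseteq> V \<times> V" using t unfolding tdg_def by simp
  ultimately show ?thesis using component_self[OF w] component_adj_closed by metis
qed

lemma interior_defects:
  assumes t: "tdg V E" and w: "interior V E w"
  obtains din dout where "din \<in> defects V E" "din \<in> in_defects E w"
    "dout \<in> defects V E" "dout \<in> out_defects E w"
proof -
  obtain p q where "(p, w) \<in> E" "(w, q) \<in> E"
    using w unfolding interior_def initial_def terminal_def by auto
  then have "\<exists>din \<in> defects V E. din \<in> in_defects E w" "\<exists>dout \<in> defects V E. dout \<in> out_defects E w"
    using edge_defect[OF t] by blast+
  then show ?thesis using that by blast
qed

lemma nontriv_component_defect:
  assumes t: "tdg V E" and K: "K \<in> nontriv_components V E"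
  shows "\<exists>d \<in> defects V E. defect_vertex d \<in> K"
proof -
  obtain v z where v: "v \<in> V" "K = component V E v" and "adj E v z"
    using K nontriv_components_eq[OF t] unfolding isolated_def by auto
  then consider "(v, z) \<in> E" | "(z, v) \<in> E" unfolding adj_def by blast
  then obtain d where "d \<in> defects V E" "d \<in> in_defects E v \<union> out_defects E v"
    by cases (use edge_defect[OF t] in blast)+
  then show ?thesis using defect_vertex_in_component[OF t v(1)] v(2) by blast
qed

lemma card_nontriv_components_le_defects:
  assumes t: "tdg V E"
  shows "card (nontriv_components V E) \<le> card (defects V E)"
proof (rule surj_card_le)
  show "finite (defects V E)" using finite_defects[OF t] .
  show "nontriv_components V E \<subseteq> (\<lambda>d. component V E (defect_vertex d)) ` defects V E"
  proof
    fix K assume K: "K \<in> nontriv_components V E"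
    then obtain d where "d \<in> defects V E" "defect_vertex d \<in> K"
      using nontriv_component_defect[OF t] by blast
    then show "K \<in> (\<lambda>d. component V E (defect_vertex d)) ` defects V E"
      using nontriv_component_eq[OF K] by blast
  qed
qed

lemma out_in_defects_disjoint: "tdg V E \<Longrightarrow> d \<in> out_defects E w \<Longrightarrow> d \<notin> in_defects E w"
  using out_in_defects_edge tdg_irrefl by metis

lemma three_le_card_defects:
  assumes t: "tdg V E" and two: "card (nontriv_components V E) = 2" and w: "interior V E w"
  shows "3 \<le> card (defects V E)"
proof -
  have wV: "w \<in> V" using w unfolding interior_def by auto
  obtain din dout where d: "din \<in> defects V E" "din \<in> in_defects E w"
    "dout \<in> defects V E" "dout \<in> out_defects E w"
    using interior_defects[OF t w] .
  have Kw: "component V E w \<in> nontriv_components V E" by (rule interior_component_nontriv[OF t w])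
  moreover have "nontriv_components V E \<noteq> {component V E w}" using two by auto
  ultimately obtain K where K: "K \<in> nontriv_components V E" "K \<noteq> component V E w"
    by blast
  obtain d where d': "d \<in> defects V E" "defect_vertex d \<in> K"
    using nontriv_component_defect[OF t K(1)] by blast
  have "defect_vertex din \<in> component V E w" "defect_vertex dout \<in> component V E w"
    using defect_vertex_in_component[OF t wV] d by auto
  then have "d \<noteq> din" "d \<noteq> dout"
    using d' K nontriv_component_eq Kw by metis+
  moreover have "din \<noteq> dout" using out_in_defects_disjoint[OF t] d by blast
  ultimately have "card {d, din, dout} = 3" by simp
  moreover have "{d, din, dout} \<subseteq> defects V E" using d d' by auto
  ultimately show ?thesis using card_mono[OF finite_defects[OF t]] by metis
qed

lemma defects_le_2_shared:
  assumes t: "tdg V E" and D: "card (defects V E) \<le> 2" and w': "interior V E w'"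
    and din: "din \<in> defects V E" "din \<in> in_defects E w"
    and dout: "dout \<in> defects V E" "dout \<in> out_defects E w"
  shows "din \<in> in_defects E w' \<and> dout \<in> out_defects E w'"
proof -
  have "din \<noteq> dout" using out_in_defects_disjoint[OF t] din dout by blast
  then have pair: "defects V E = {din, dout}"
    using din dout D by (intro card_seteq[OF finite_defects[OF t], symmetric]) auto
  \<comment> \<open>The defects of \<open>w'\<close> are again \<open>din\<close> and \<open>dout\<close>; swapped they would give a 2-cycle.\<close>
  obtain din' dout' where d': "din' \<in> defects V E" "din' \<in> in_defects E w'"
    "dout' \<in> defects V E" "dout' \<in> out_defects E w'"
    using interior_defects[OF t w'] .
  have "\<not> (din' = dout \<and> dout' = din)"
  proof
    assume "din' = dout \<and> dout' = din"
    then have "(w, w') \<in> E" "(w', w) \<in> E" using out_in_defects_edge din dout d' by metis+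
    then show False using tdg_asym[OF t] by blast
  qed
  moreover have "din' \<noteq> dout'" using out_in_defects_disjoint[OF t] d' by blast
  moreover have "din' \<in> {din, dout}" "dout' \<in> {din, dout}" using d' pair by auto
  ultimately have "din' = din \<and> dout' = dout" by auto
  then show ?thesis using d' by simp
qed

lemma defects_le_2_poles:
  assumes t: "tdg V E" and D: "card (defects V E) \<le> 2" and w12: "w1 \<noteq> w2"
    and w1: "interior V E w1" and w2: "interior V E w2"
  obtains u v where "initial V E u" "terminal V E v"
    "\<And>w. interior V E w \<Longrightarrow> (u, w) \<in> E \<and> (w, v) \<in> E"
proof -
  obtain din dout where d: "din \<in> defects V E" "din \<in> in_defects E w1"
    "dout \<in> defects V E" "dout \<in> out_defects E w1"
    using interior_defects[OF t w1] .
  have shared: "din \<in> in_defects E w \<and> dout \<in> out_defects E w" if "interior V E w" for w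
    using defects_le_2_shared[OF t D that d] .
  obtain u where u: "din = Fork u"
    using in_defects_shared[OF w12 d(2) conjunct1[OF shared[OF w2]]] by blast
  obtain v where v: "dout = Join v"
    using out_defects_shared[OF w12 d(4) conjunct2[OF shared[OF w2]]] by blast
  have edges: "(u, w) \<in> E \<and> (w, v) \<in> E" if "interior V E w" for w
    using shared[OF that] unfolding u v by (auto intro: Fork_in_defects Join_out_defects)
  have "u \<in> V" "v \<in> V" using tdg_edgeD[OF t] edges[OF w1] by auto
  moreover have "\<not> interior V E u" "\<not> interior V E v"
    using edges[of u] edges[of v] tdg_irrefl[OF t] by auto
  moreover have "\<not> terminal V E u" "\<not> initial V E v"
    using edges[OF w1] unfolding initial_def terminal_def by auto
  ultimately have "initial V E u" "terminal V E v" unfolding interior_def by auto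
  then show ?thesis using that edges by blast
qed

lemma initial_if_pred_of_single_interior:
  assumes t: "tdg V E" and only: "\<And>v. interior V E v \<Longrightarrow> v = w" and e: "(a, w) \<in> E"
  shows "initial V E a"
proof -
  have "a \<in> V" "\<not> terminal V E a" "a \<noteq> w"
    using e tdg_edgeD[OF t e] tdg_irrefl[OF t] unfolding terminal_def by auto
  then show ?thesis using only unfolding interior_def by auto
qed

lemma single_interior_initial_side:
  assumes m: "minimal_xy_tdg x y V E" and w: "interior V E w"
    and only: "\<And>v. interior V E v \<Longrightarrow> v = w"
  defines "P \<equiv> {a. initial V E a \<and> adj E w a}"
  shows "card P > 0 \<and> (\<forall>a \<in> P. \<forall>z. adj E a z \<longrightarrow> z = w \<or> terminal V E z)
    \<and> (card P > 1 \<longrightarrow> (\<forall>a \<in> P. \<forall>z. adj E a z \<longrightarrow> z = w))"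
proof (intro conjI impI ballI allI)
  have t: "tdg V E" using m unfolding minimal_xy_tdg_def xy_tdg_def by auto
  have fP: "finite P" using t unfolding P_def initial_def tdg_def by (auto intro: rev_finite_subset)
  have P_edge: "(a, w) \<in> E" if "a \<in> P" for a
    using that unfolding P_def initial_def adj_def by auto
  obtain p where "(p, w) \<in> E" using w unfolding interior_def initial_def by auto
  then have "p \<in> P" using initial_if_pred_of_single_interior[OF t only] unfolding P_def adj_def by auto
  then show "card P > 0" using fP by (auto simp: card_gt_0_iff)
  fix a z assume a: "a \<in> P" and az: "adj E a z"
  then have e: "(a, z) \<in> E" using a unfolding P_def initial_def adj_def by auto
  then have "z \<in> V" "\<not> initial V E z" using tdg_edgeD[OF t e] unfolding initial_def by auto
  then show "z = w \<or> terminal V E z" using only unfolding interior_def by auto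
  assume "card P > 1"
  then have "card (P - {a}) > 0" using a fP by (simp add: card_Diff_singleton)
  then obtain a' where "a' \<in> P" "a' \<noteq> a" by (auto simp: card_gt_0_iff)
  then have "2 \<le> card (preds E w)" using two_le_card_preds[OF t P_edge[OF a] P_edge] by blast
  then have "card (succs E a) = 1" using minimal_xy_tdgD[OF m P_edge[OF a]] by linarith
  moreover have "w \<in> succs E a" using P_edge[OF a] unfolding succs_def by simp
  ultimately have "succs E a = {w}" by (metis card_1_singletonE singletonD)
  then show "z = w" using e unfolding succs_def by auto
qed

lemma single_interior_terminal_side:
  assumes m: "minimal_xy_tdg x y V E" and w: "interior V E w"
    and only: "\<And>v. interior V E v \<Longrightarrow> v = w"
  defines "Q \<equiv> {b. terminal V E b \<and> adj E w b}"
  shows "card Q > 0 \<and> (\<forall>b \<in> Q. \<forall>z. adj E b z \<longrightarrow> z = w \<or> initial V E z)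
    \<and> (card Q > 1 \<longrightarrow> (\<forall>b \<in> Q. \<forall>z. adj E b z \<longrightarrow> z = w))"
proof -
  have w': "interior V (E\<inverse>) w" using w by simp
  have only': "v = w" if "interior V (E\<inverse>) v" for v using that by (intro only) simp
  from single_interior_initial_side[OF minimal_xy_tdg_converse[OF m] w' only']
  show ?thesis unfolding Q_def by simp
qed

definition hub_component :: "'a set \<Rightarrow> ('a \<times> 'a) set \<Rightarrow> 'a set \<Rightarrow> bool" where
  "hub_component V E C \<longleftrightarrow> (\<exists>w. {c \<in> C. interior V E c} = {w} \<and>
    (let P = {a. initial V E a \<and> adj E w a};
         Q = {b. terminal V E b \<and> adj E w b} in
      card P > 0 \<and> card Q > 0
      \<and> (card P = 1 \<longrightarrow> (\<forall>a \<in> P. \<forall>z. adj E a z \<longrightarrow> z = w \<or> terminal V E z))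
      \<and> (card Q = 1 \<longrightarrow> (\<forall>b \<in> Q. \<forall>z. adj E b z \<longrightarrow> z = w \<or> initial V E z))
      \<and> (card P > 1 \<longrightarrow> (\<forall>a \<in> P. \<forall>z. adj E a z \<longrightarrow> z = w))
      \<and> (card Q > 1 \<longrightarrow> (\<forall>b \<in> Q. \<forall>z. adj E b z \<longrightarrow> z = w))))"

lemma hub_component_if_single_interior:
  assumes m: "minimal_xy_tdg x y V E" and C: "nontriv_components V E = {C}"
    and W: "{c \<in> C. interior V E c} = {w}"
  shows "hub_component V E C"
proof -
  have t: "tdg V E" using m unfolding minimal_xy_tdg_def xy_tdg_def by auto
  have w: "interior V E w" using W by auto
  have only: "v = w" if "interior V E v" for v
    using that W interior_in_nontriv_component[OF t C that] by auto
  show ?thesis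
    unfolding hub_component_def Let_def
    using W single_interior_initial_side[OF m w only] single_interior_terminal_side[OF m w only]
    by auto
qed

lemma bipolar_edge_near_poles:
  assumes m: "minimal_xy_tdg x y V E" and u: "initial V E u" and v: "terminal V E v"
    and w12: "w1 \<noteq> w2" "interior V E w1" "interior V E w2"
    and poles: "\<And>w. interior V E w \<Longrightarrow> (u, w) \<in> E \<and> (w, v) \<in> E"
    and e: "(p, q) \<in> E"
    and near: "p \<in> {u, v} \<union> succs E u \<union> preds E v \<or> q \<in> {u, v} \<union> succs E u \<union> preds E v"
  shows "p = u \<or> q = v"
proof -
  have t: "tdg V E" using m unfolding minimal_xy_tdg_def xy_tdg_def by auto
  have from_u: "preds E z = {u}" if "(u, z) \<in> E" for z
  proof -
    have "2 \<le> card (succs E u)" using two_le_card_succs[OF t] poles w12 by blast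
    then have "card (preds E z) = 1" using minimal_xy_tdgD[OF m that] by linarith
    moreover have "u \<in> preds E z" using that unfolding preds_def by simp
    ultimately show ?thesis by (metis card_1_singletonE singletonD)
  qed
  have to_v: "succs E z = {v}" if "(z, v) \<in> E" for z
  proof -
    have "2 \<le> card (preds E v)" using two_le_card_preds[OF t] poles w12 by blast
    then have "card (succs E z) = 1" using minimal_xy_tdgD[OF m that] by linarith
    moreover have "v \<in> succs E z" using that unfolding succs_def by simp
    ultimately show ?thesis by (metis card_1_singletonE singletonD)
  qed
  have inner: "interior V E z" if "(p', z) \<in> E" "(z, q') \<in> E" for z p' q'
    using that tdg_edgeD[OF t that(1)] unfolding interior_def initial_def terminal_def by auto
  have "p \<noteq> v" "q \<noteq> u" using e u v unfolding initial_def terminal_def by auto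
  then consider "p = u" | "q = v" | "(u, p) \<in> E" | "(p, v) \<in> E" | "(u, q) \<in> E" | "(q, v) \<in> E"
    using near unfolding succs_def preds_def by auto
  then show ?thesis
  proof cases
    case 3
    then have "interior V E p" using inner e by blast
    then have "succs E p = {v}" using poles to_v by blast
    then show ?thesis using e unfolding succs_def by auto
  next
    case 4
    then show ?thesis using to_v e unfolding succs_def by auto
  next
    case 5
    then show ?thesis using from_u e unfolding preds_def by auto
  next
    case 6
    then have "interior V E q" using inner e by blast
    then have "preds E q = {u}" using poles from_u by blast
    then show ?thesis using e unfolding preds_def by auto
  qed auto
qed

lemma bipolar_edge:
  assumes m: "minimal_xy_tdg x y V E" and C: "nontriv_components V E = {C}"
    and u: "u \<in> C" "initial V E u" and v: "terminal V E v"
    and w12: "w1 \<noteq> w2" "interior V E w1" "interior V E w2"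
    and poles: "\<And>w. interior V E w \<Longrightarrow> (u, w) \<in> E \<and> (w, v) \<in> E"
    and e: "(p, q) \<in> E"
  shows "p = u \<or> q = v"
proof -
  have t: "tdg V E" using m unfolding minimal_xy_tdg_def xy_tdg_def by auto
  let ?S = "{u, v} \<union> succs E u \<union> preds E v"
  have near: "p' = u \<or> q' = v" if "(p', q') \<in> E" "p' \<in> ?S \<or> q' \<in> ?S" for p' q'
    using bipolar_edge_near_poles[OF m u(2) v w12 _ that] poles by blast
  have "component V E u \<subseteq> ?S"
  proof (rule component_subset_closed)
    fix a z assume a: "a \<in> ?S" and "adj E a z"
    then consider "(a, z) \<in> E" | "(z, a) \<in> E" unfolding adj_def by blast
    then show "z \<in> ?S"
    proof cases
      case 1
      then have "a = u \<or> z = v" using near a by blast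
      then show ?thesis using 1 unfolding succs_def by auto
    next
      case 2
      then have "z = u \<or> a = v" using near a by blast
      then show ?thesis using 2 unfolding preds_def by auto
    qed
  qed simp
  moreover have "p \<in> C" using edge_in_nontriv_component[OF t C, of p q] e unfolding adj_def by simp
  moreover have "C = component V E u" using nontriv_component_eq[of C V E u] C u(1) by simp
  ultimately have "p \<in> ?S" by blast
  then show ?thesis using near[OF e] by blast
qed

lemma defects_subset_poles:
  assumes m: "minimal_xy_tdg x y V E" and C: "nontriv_components V E = {C}"
    and u: "u \<in> C" "initial V E u" and v: "terminal V E v"
    and w12: "w1 \<noteq> w2" "interior V E w1" "interior V E w2"
    and poles: "\<And>w. interior V E w \<Longrightarrow> (u, w) \<in> E \<and> (w, v) \<in> E"
  shows "defects V E \<subseteq> {Fork u, Join v}"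
proof -
  have t: "tdg V E" using m unfolding minimal_xy_tdg_def xy_tdg_def by auto
  have edge: "p = u \<or> q = v" if "(p, q) \<in> E" for p q
    using bipolar_edge[OF m C u v w12 _ that] poles by blast
  have su: "2 \<le> card (succs E u)" and pv: "2 \<le> card (preds E v)"
    using two_le_card_succs[OF t] two_le_card_preds[OF t] poles w12 by blast+
  show ?thesis
  proof
    fix d assume "d \<in> defects V E"
    then consider (bridge) p q where "d = Bridge p q" "(p, q) \<in> bridges E"
      | (fork) p where "d = Fork p" "p \<in> forks V E"
      | (join) q where "d = Join q" "q \<in> joins V E"
      unfolding defects_def by auto
    then show "d \<in> {Fork u, Join v}"
    proof cases
      case bridge
      then have "(p, q) \<in> E" "card (succs E p) = 1" "card (preds E q) = 1"
        unfolding bridges_def by auto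
      moreover from \<open>(p, q) \<in> E\<close> have "p = u \<or> q = v" by (rule edge)
      ultimately show ?thesis using su pv by auto
    next
      case fork
      have "p = u"
      proof (rule ccontr)
        assume "p \<noteq> u"
        then have "succs E p \<subseteq> {v}" using edge unfolding succs_def by auto
        then have "card (succs E p) \<le> 1" using card_mono[of "{v}"] by simp
        then show False using fork unfolding forks_def by auto
      qed
      then show ?thesis using fork by simp
    next
      case join
      have "q = v"
      proof (rule ccontr)
        assume "q \<noteq> v"
        then have "preds E q \<subseteq> {u}" using edge unfolding preds_def by auto
        then have "card (preds E q) \<le> 1" using card_mono[of "{u}"] by simp
        then show False using join unfolding joins_def by auto
      qed
      then show ?thesis using join by simp
    qed
  qed
qed

definition bipolar_component :: "'a set \<Rightarrow> ('a \<times> 'a) set \<Rightarrow> 'a set \<Rightarrow> bool" where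
  "bipolar_component V E C \<longleftrightarrow> (\<exists>u v. u \<in> C \<and> v \<in> C \<and> initial V E u \<and> terminal V E v
    \<and> card {w \<in> C. interior V E w} \<ge> 2
    \<and> (\<forall>w \<in> C. interior V E w \<longrightarrow> adj E u w \<and> adj E v w)
    \<and> (\<forall>z. adj E u z \<longrightarrow> interior V E z \<or> terminal V E z)
    \<and> (\<forall>z. adj E v z \<longrightarrow> interior V E z \<or> initial V E z))"

lemma card_defects_le_2_if_bipolar:
  assumes m: "minimal_xy_tdg x y V E" and C: "nontriv_components V E = {C}"
    and bipolar: "bipolar_component V E C"
  shows "card (defects V E) \<le> 2"
proof -
  have t: "tdg V E" using m unfolding minimal_xy_tdg_def xy_tdg_def by auto
  obtain u v where u: "u \<in> C" "initial V E u" and v: "terminal V E v"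
    and two: "card {w \<in> C. interior V E w} \<ge> 2"
    and adjs: "\<forall>w \<in> C. interior V E w \<longrightarrow> adj E u w \<and> adj E v w"
    using bipolar unfolding bipolar_component_def by blast
  have "{w \<in> C. interior V E w} \<noteq> {}" using two by (metis card.empty not_numeral_le_zero)
  then obtain w1 where w1: "w1 \<in> C" "interior V E w1" by auto
  have "{w \<in> C. interior V E w} \<noteq> {w1}" using two by auto
  then obtain w2 where w2: "w2 \<in> C" "interior V E w2" "w1 \<noteq> w2" using w1 by auto
  have "(u, w) \<in> E \<and> (w, v) \<in> E" if "interior V E w" for w
    using adjs interior_in_nontriv_component[OF t C that] that u(2) v
    unfolding initial_def terminal_def adj_def by blast
  then have "defects V E \<subseteq> {Fork u, Join v}" using defects_subset_poles[OF m C u v] w1 w2 by blast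
  then have "card (defects V E) \<le> card {Fork u, Join v}" by (rule card_mono[rotated]) simp
  also have "\<dots> \<le> 2" by (simp add: card_insert_if)
  finally show ?thesis .
qed

lemma bipolar_if_defects_le_2:
  assumes m: "minimal_xy_tdg x y V E" and C: "nontriv_components V E = {C}"
    and D: "card (defects V E) \<le> 2"
    and w12: "w1 \<noteq> w2" "w1 \<in> C" "interior V E w1" "w2 \<in> C" "interior V E w2"
  shows "bipolar_component V E C"
proof -
  have t: "tdg V E" using m unfolding minimal_xy_tdg_def xy_tdg_def by auto
  obtain u v where u: "initial V E u" and v: "terminal V E v"
    and poles: "\<And>w. interior V E w \<Longrightarrow> (u, w) \<in> E \<and> (w, v) \<in> E"
    using defects_le_2_poles[OF t D w12(1,3,5)] by blast
  have "u \<in> C" "v \<in> C"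
    using poles[OF w12(3)] edge_in_nontriv_component[OF t C] unfolding adj_def by blast+
  moreover have "card {w \<in> C. interior V E w} \<ge> 2"
  proof -
    have "C \<subseteq> V" using C unfolding nontriv_components_def components_def by auto
    then have "finite {w \<in> C. interior V E w}" using t unfolding tdg_def by (auto intro: rev_finite_subset)
    moreover have "{w1, w2} \<subseteq> {w \<in> C. interior V E w}" using w12 by auto
    ultimately have "card {w1, w2} \<le> card {w \<in> C. interior V E w}" by (rule card_mono)
    then show ?thesis using w12(1) by simp
  qed
  moreover have "\<forall>z. adj E u z \<longrightarrow> interior V E z \<or> terminal V E z"
    using u tdg_edgeD[OF t] unfolding interior_def initial_def adj_def by blast
  moreover have "\<forall>z. adj E v z \<longrightarrow> interior V E z \<or> initial V E z"
    using v tdg_edgeD[OF t] unfolding interior_def terminal_def adj_def by blast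
  ultimately show ?thesis
    unfolding bipolar_component_def using u v poles unfolding adj_def by blast
qed

section \<open>A minimal graph with two defects\<close>

lemma succs_map_prod:
  assumes inj: "inj_on f V" and sub: "E \<subseteq> V \<times> V" and a: "a \<in> V"
  shows "succs (map_prod f f ` E) (f a) = f ` succs E a"
proof
  show "f ` succs E a \<subseteq> succs (map_prod f f ` E) (f a)" unfolding succs_def by auto
  show "succs (map_prod f f ` E) (f a) \<subseteq> f ` succs E a"
  proof
    fix z assume "z \<in> succs (map_prod f f ` E) (f a)"
    then obtain a' b where e: "(a', b) \<in> E" "f a' = f a" "z = f b" unfolding succs_def by auto
    then have "a' = a" using inj_onD[OF inj] sub a by blast
    then show "z \<in> f ` succs E a" using e unfolding succs_def by auto
  qed
qed

lemma preds_map_prod: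
  assumes "inj_on f V" and "E \<subseteq> V \<times> V" and "a \<in> V"
  shows "preds (map_prod f f ` E) (f a) = f ` preds E a"
proof -
  have "E\<inverse> \<subseteq> V \<times> V" using assms(2) by (metis converse_Times converse_mono)
  then have "succs (map_prod f f ` (E\<inverse>)) (f a) = f ` succs (E\<inverse>) a"
    by (rule succs_map_prod[OF assms(1) _ assms(3)])
  moreover have "(map_prod f f ` E)\<inverse> = map_prod f f ` (E\<inverse>)" by auto
  ultimately show ?thesis by (metis succs_converse)
qed

lemma minimal_xy_tdg_relabel:
  assumes inj: "inj_on f V" and m: "minimal_xy_tdg x y V E"
  shows "minimal_xy_tdg x y (f ` V) (map_prod f f ` E)" and "card (map_prod f f ` E) = card E"
proof -
  let ?E = "map_prod f f ` E" and ?V = "f ` V"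
  have t: "tdg V E" and cx: "card {v \<in> V. initial V E v} = x"
    and cy: "card {v \<in> V. terminal V E v} = y"
    using m unfolding minimal_xy_tdg_def xy_tdg_def by auto
  have sub: "E \<subseteq> V \<times> V" and fV: "finite V" using t unfolding tdg_def by auto
  have card_succs: "card (succs ?E (f a)) = card (succs E a)" if "a \<in> V" for a
  proof -
    have "succs E a \<subseteq> V" using sub unfolding succs_def by auto
    then show ?thesis using succs_map_prod[OF inj sub that] inj by (simp add: card_image inj_on_subset)
  qed
  have card_preds: "card (preds ?E (f a)) = card (preds E a)" if "a \<in> V" for a
  proof -
    have "preds E a \<subseteq> V" using sub unfolding preds_def by auto
    then show ?thesis using preds_map_prod[OF inj sub that] inj by (simp add: card_image inj_on_subset)
  qed
  have "{w \<in> ?V. initial ?V ?E w} = f ` {v \<in> V. initial V E v}"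
    using preds_map_prod[OF inj sub] by (auto simp: initial_iff_preds)
  then have cx': "card {w \<in> ?V. initial ?V ?E w} = x"
    using cx inj by (simp add: card_image inj_on_subset)
  have "{w \<in> ?V. terminal ?V ?E w} = f ` {v \<in> V. terminal V E v}"
    using succs_map_prod[OF inj sub] by (auto simp: terminal_iff_succs)
  then have cy': "card {w \<in> ?V. terminal ?V ?E w} = y"
    using cy inj by (simp add: card_image inj_on_subset)
  have "?E \<subseteq> inv_image E (inv_into V f)" using sub inj by auto
  moreover have "wf E" using t tdg_finite_edges[OF t] by (simp add: tdg_def finite_acyclic_wf)
  ultimately have "acyclic ?E" by (meson wf_acyclic wf_inv_image wf_subset)
  then have xy: "xy_tdg x y ?V ?E" using fV sub cx' cy' unfolding xy_tdg_def tdg_def by auto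
  have "card (succs ?E p) = 1 \<or> card (preds ?E q) = 1" if e: "(p, q) \<in> ?E" for p q
  proof -
    obtain a b where ab: "(a, b) \<in> E" "p = f a" "q = f b" using e by force
    then have "a \<in> V" "b \<in> V" using sub by auto
    then show ?thesis using minimal_xy_tdgD[OF m ab(1)] card_succs card_preds ab by simp
  qed
  then show "minimal_xy_tdg x y ?V ?E" using minimal_xy_tdg_iff[OF xy] by blast
  show "card ?E = card E"
    using sub inj by (intro card_image) (auto intro: inj_on_subset map_prod_inj_on)
qed

text \<open>Vertex \<open>0\<close> forks into the \<open>m\<close> middle vertices \<open>a + 1, \<dots>, a + m\<close> and the \<open>b - 1\<close>
  sinks above them; vertex \<open>1\<close> joins the middle vertices and the \<open>a - 1\<close> sources \<open>2, \<dots>, a\<close>.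
  Vertices from \<open>a + m + b\<close> on are isolated.\<close>

definition fork_join_graph :: "nat \<Rightarrow> nat \<Rightarrow> nat \<Rightarrow> (nat \<times> nat) set" where
  "fork_join_graph a b m = {(0, i) | i. a < i \<and> i < a + m + b} \<union> {(i, 1) | i. 1 < i \<and> i \<le> a + m}"

lemma fork_join_graph_iff:
  "(p, q) \<in> fork_join_graph a b m \<longleftrightarrow>
    (p = 0 \<and> a < q \<and> q < a + m + b) \<or> (q = 1 \<and> 1 < p \<and> p \<le> a + m)"
  unfolding fork_join_graph_def by auto

lemma fork_join_graph_minimal:
  fixes s :: nat
  assumes a: "1 \<le> a" and b: "1 \<le> b" and m: "1 \<le> m"
  defines "N \<equiv> a + b + m + s"
  shows "minimal_xy_tdg (a + s) (b + s) {0..<N} (fork_join_graph a b m)"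
proof -
  let ?E = "fork_join_graph a b m" and ?V = "{0..<N}"
  have "?E \<subseteq> measure (\<lambda>i. if i = 0 then 0 else if i = 1 then 2 else 1)"
    using a by (auto simp: fork_join_graph_iff)
  then have "acyclic ?E" by (meson acyclic_subset wf_acyclic wf_measure)
  moreover have "?E \<subseteq> ?V \<times> ?V" using b unfolding N_def by (auto simp: fork_join_graph_iff)
  ultimately have t: "tdg ?V ?E" unfolding tdg_def by simp
  have "(2, 1) \<in> ?E" "(0, a + 1) \<in> ?E" using a b m by (auto simp: fork_join_graph_iff)
  then have "(\<forall>u. (u, v) \<notin> ?E) \<longleftrightarrow> \<not> (a < v \<and> v < a + m + b) \<and> v \<noteq> 1"
    and "(\<forall>w. (v, w) \<notin> ?E) \<longleftrightarrow> v \<noteq> 0 \<and> \<not> (1 < v \<and> v \<le> a + m)" for v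
    by (auto simp: fork_join_graph_iff)
  then have "{v \<in> ?V. initial ?V ?E v} = insert 0 ({2..a} \<union> {a+m+b..<N})"
    and "{v \<in> ?V. terminal ?V ?E v} = insert 1 {a+m+1..<N}"
    unfolding initial_def terminal_def N_def using a b m by auto
  moreover have "card (insert 0 ({2..a} \<union> {a+m+b..<N})) = a + s"
  proof -
    have "{2..a} \<inter> {a+m+b..<N} = {}" using m by auto
    then show ?thesis using a unfolding N_def by (simp add: card_Un_disjoint)
  qed
  moreover have "card (insert 1 {a+m+1..<N}) = b + s"
    using a b unfolding N_def by simp
  moreover have "card (succs ?E p) = 1 \<or> card (preds ?E q) = 1" if "(p, q) \<in> ?E" for p q
  proof -
    from that consider "p = 0" "a < q" "q < a + m + b" | "q = 1" "1 < p" "p \<le> a + m"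
      unfolding fork_join_graph_iff by auto
    then show ?thesis
    proof cases
      case 1
      then have "preds ?E q = {0}" using a unfolding preds_def fork_join_graph_iff by auto
      then show ?thesis by simp
    next
      case 2
      then have "succs ?E p = {1}" unfolding succs_def fork_join_graph_iff by auto
      then show ?thesis by simp
    qed
  qed
  ultimately show ?thesis
    using t by (auto simp: minimal_xy_tdg_iff xy_tdg_def)
qed

lemma card_fork_join_graph:
  assumes "1 \<le> a"
  shows "card (fork_join_graph a b m) = (m + b - 1) + (a + m - 1)"
proof -
  have "fork_join_graph a b m = Pair 0 ` {a<..<a+m+b} \<union> (\<lambda>i. (i, 1)) ` {1<..a+m}"
    unfolding fork_join_graph_def by auto
  moreover have "Pair 0 ` {a<..<a+m+b} \<inter> (\<lambda>i. (i, 1)) ` {1<..a+m} = {}" using assms by auto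
  ultimately show ?thesis
    by (simp add: card_Un_disjoint card_image inj_on_def)
qed

lemma exists_minimal_xy_tdg_two_defects:
  fixes V :: "'a set"
  assumes "finite V" and "card V = n" and "1 \<le> x" and "1 \<le> y" and "x + 2 \<le> n" and "y + 2 \<le> n"
  shows "\<exists>(V' :: 'a set) E'. minimal_xy_tdg x y V' E' \<and> card V' = n \<and> card E' + 2 + x + y = 2 * n"
proof -
  \<comment> \<open>\<open>s\<close> isolated vertices are needed when \<open>x + y \<ge> n\<close>.\<close>
  define s where "s = x + y + 1 - n"
  define a where "a = x - s"
  define b where "b = y - s"
  define m where "m = n + s - x - y"
  have abm: "1 \<le> a" "1 \<le> b" "1 \<le> m" and "a + b + m + s = n" "a + s = x" "b + s = y"
    using assms unfolding s_def a_def b_def m_def by auto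
  then have "minimal_xy_tdg x y {0..<n} (fork_join_graph a b m)"
    and "card (fork_join_graph a b m) + 2 + x + y = 2 * n"
    using fork_join_graph_minimal[OF abm, of s] card_fork_join_graph[OF abm(1), of b m] by auto
  moreover obtain f where "bij_betw f {0..<n} V"
    using ex_bij_betw_nat_finite[OF assms(1)] assms(2) by auto
  then have "inj_on f {0..<n}" "f ` {0..<n} = V" unfolding bij_betw_def by auto
  ultimately show ?thesis
    using minimal_xy_tdg_relabel[of f "{0..<n}" x y] assms(2) by metis
qed

section \<open>The characterisation\<close>

definition edge_maximal :: "nat \<Rightarrow> nat \<Rightarrow> nat \<Rightarrow> ('a \<times> 'a) set \<Rightarrow> bool" where
  "edge_maximal x y n E \<longleftrightarrow>
    (\<forall>(V' :: 'a set) E'. minimal_xy_tdg x y V' E' \<and> card V' = n \<longrightarrow> card E' \<le> card E)"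

lemma edge_maximal_iff_defects_le_2:
  assumes m: "minimal_xy_tdg x y V E" and n: "card V = n" and "1 \<le> x" and "1 \<le> y"
  shows "edge_maximal x y n E \<longleftrightarrow> card (defects V E) \<le> 2"
proof
  assume max: "edge_maximal x y n E"
  show "card (defects V E) \<le> 2"
  proof (cases "x + 2 \<le> n \<and> y + 2 \<le> n")
    case True
    have "finite V" using m unfolding minimal_xy_tdg_def xy_tdg_def tdg_def by auto
    then obtain V' :: "'a set" and E' where "minimal_xy_tdg x y V' E'" "card V' = n"
      "card E' + 2 + x + y = 2 * n"
      using exists_minimal_xy_tdg_two_defects True n assms(3,4) by metis
    then show ?thesis using max minimal_edge_count[OF m] n unfolding edge_maximal_def by fastforce
  next
    case False
    then show ?thesis
      using card_defects_few_noninitial[OF m] card_defects_few_nonterminal[OF m] n by linarith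
  qed
next
  assume D: "card (defects V E) \<le> 2"
  show "edge_maximal x y n E"
    unfolding edge_maximal_def
  proof (intro allI impI)
    fix V' :: "'a set" and E' assume "minimal_xy_tdg x y V' E' \<and> card V' = n"
    then have m': "minimal_xy_tdg x y V' E'" and n': "card V' = n" by auto
    have "card (defects V E) \<le> card (defects V' E')"
    proof (cases "x + 2 \<le> n \<and> y + 2 \<le> n")
      case True
      then show ?thesis using two_le_card_defects[OF m'] n' D by simp
    next
      case False
      then show ?thesis
        using card_defects_few_noninitial[OF m] card_defects_few_nonterminal[OF m]
          card_defects_few_noninitial[OF m'] card_defects_few_nonterminal[OF m'] n n'
        by linarith
    qed
    then show "card E' \<le> card E" using minimal_edge_count[OF m] minimal_edge_count[OF m'] n n'
      by linarith
  qed
qed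

definition extremal_shape :: "nat \<Rightarrow> nat \<Rightarrow> nat \<Rightarrow> 'a set \<Rightarrow> ('a \<times> 'a) set \<Rightarrow> bool" where
  "extremal_shape x y n V E \<longleftrightarrow> card (nontriv_components V E) \<le> 2
    \<and> (nontriv_components V E = {} \<longrightarrow> n = x \<and> x = y)
    \<and> (card (nontriv_components V E) = 2 \<longrightarrow> (\<forall>v \<in> V. \<not> interior V E v))
    \<and> (\<forall>C. nontriv_components V E = {C} \<longrightarrow>
        (\<forall>v \<in> C. \<not> interior V E v) \<or> bipolar_component V E C \<or> hub_component V E C)"

lemma card_defects_le_2_if_extremal_shape:
  assumes m: "minimal_xy_tdg x y V E" and shape: "extremal_shape x y n V E"
  shows "card (defects V E) \<le> 2"
proof -
  have t: "tdg V E" using m unfolding minimal_xy_tdg_def xy_tdg_def by auto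
  have fin: "finite (nontriv_components V E)"
    using t nontriv_components_eq[OF t] unfolding tdg_def by simp
  have interior_in: "v \<in> C" if "nontriv_components V E = {C}" "interior V E v" for C v
    using interior_in_nontriv_component[OF t that] .
  have "card (nontriv_components V E) \<le> 2" using shape unfolding extremal_shape_def by simp
  then consider "card (nontriv_components V E) = 0" | "card (nontriv_components V E) = 1"
    | "card (nontriv_components V E) = 2" by linarith
  then show ?thesis
  proof cases
    case 1
    then have "nontriv_components V E = {}" using fin by simp
    then have I: "{v \<in> V. interior V E v} = {}" using interior_component_nontriv[OF t] by auto
    show ?thesis using card_defects_le_interior_plus_components[OF m] 1 by (simp add: I)
  next
    case 2
    then obtain C where C: "nontriv_components V E = {C}" by (rule card_1_singletonE)
    then consider "\<forall>v \<in> C. \<not> interior V E v" | "bipolar_component V E C" | "hub_component V E C"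
      using shape unfolding extremal_shape_def by blast
    then show ?thesis
    proof cases
      case 1
      then have I: "{v \<in> V. interior V E v} = {}" using interior_in[OF C] by auto
      show ?thesis using card_defects_le_interior_plus_components[OF m] 2 by (simp add: I)
    next
      case 2
      then show ?thesis using card_defects_le_2_if_bipolar[OF m C] by blast
    next
      case 3
      then obtain w where W: "{c \<in> C. interior V E c} = {w}" unfolding hub_component_def by blast
      then have "w \<in> V" unfolding interior_def by blast
      then have I: "{v \<in> V. interior V E v} = {w}" using W interior_in[OF C] by auto
      show ?thesis using card_defects_le_interior_plus_components[OF m] 2 by (simp add: I)
    qed
  next
    case 3
    then have I: "{v \<in> V. interior V E v} = {}" using shape unfolding extremal_shape_def by auto
    show ?thesis using card_defects_le_interior_plus_components[OF m] 3 by (simp add: I)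
  qed
qed

lemma extremal_shape_if_defects_le_2:
  assumes m: "minimal_xy_tdg x y V E" and n: "card V = n" and D: "card (defects V E) \<le> 2"
  shows "extremal_shape x y n V E"
proof -
  have t: "tdg V E" and cx: "card {v \<in> V. initial V E v} = x"
    and cy: "card {v \<in> V. terminal V E v} = y"
    using m unfolding minimal_xy_tdg_def xy_tdg_def by auto
  have "nontriv_components V E = {} \<longrightarrow> n = x \<and> x = y"
  proof
    assume "nontriv_components V E = {}"
    then have "E = {}"
      using nontriv_components_eq[OF t] tdg_edgeD[OF t] unfolding isolated_def adj_def by fast
    then show "n = x \<and> x = y" using cx cy n unfolding initial_def terminal_def by simp
  qed
  moreover have "card (nontriv_components V E) = 2 \<longrightarrow> (\<forall>v \<in> V. \<not> interior V E v)"
    using three_le_card_defects[OF t] D by fastforce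
  moreover have "(\<forall>v \<in> C. \<not> interior V E v) \<or> bipolar_component V E C \<or> hub_component V E C"
    if C: "nontriv_components V E = {C}" for C
  proof -
    let ?W = "{c \<in> C. interior V E c}"
    consider "?W = {}" | w where "?W = {w}" | w1 w2 where "w1 \<in> ?W" "w2 \<in> ?W" "w1 \<noteq> w2"
      by (metis all_not_in_conv is_singletonI' is_singleton_the_elem)
    then show ?thesis
    proof cases
      case 1
      then show ?thesis by auto
    next
      case 2
      then show ?thesis using hub_component_if_single_interior[OF m C] by blast
    next
      case 3
      then show ?thesis using bipolar_if_defects_le_2[OF m C D] by blast
    qed
  qed
  ultimately show ?thesis
    unfolding extremal_shape_def using card_nontriv_components_le_defects[OF t] D by auto
qed

theorem mainTheorem3:
  fixes V :: "'a set" and E :: "('a \<times> 'a) set" and x y n :: nat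
  assumes "x \<ge> 1" and "y \<ge> 1" and "n \<ge> max x y"
    and "minimal_xy_tdg x y V E" and "card V = n"
  shows "(\<forall>(V' :: 'a set) E'. minimal_xy_tdg x y V' E' \<and> card V' = n \<longrightarrow> card E' \<le> card E)
    \<longleftrightarrow>
    (card (nontriv_components V E) \<le> 2
     \<and> (nontriv_components V E = {} \<longrightarrow> n = x \<and> x = y)
     \<and> (card (nontriv_components V E) = 2 \<longrightarrow> (\<forall>v \<in> V. \<not> interior V E v))
     \<and> (\<forall>C. nontriv_components V E = {C} \<longrightarrow>
          ((\<forall>v \<in> C. \<not> interior V E v)
           \<or> (\<exists>u v. u \<in> C \<and> v \<in> C \<and> initial V E u \<and> terminal V E v
                \<and> card {w \<in> C. interior V E w} \<ge> 2
                \<and> (\<forall>w \<in> C. interior V E w \<longrightarrow> adj E u w \<and> adj E v w)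
                \<and> (\<forall>z. adj E u z \<longrightarrow> interior V E z \<or> terminal V E z)
                \<and> (\<forall>z. adj E v z \<longrightarrow> interior V E z \<or> initial V E z))
           \<or> (\<exists>w. {c \<in> C. interior V E c} = {w} \<and>
                (let P = {a. initial V E a \<and> adj E w a};
                     Q = {b. terminal V E b \<and> adj E w b} in
                  card P > 0 \<and> card Q > 0
                  \<and> (card P = 1 \<longrightarrow> (\<forall>a \<in> P. \<forall>z. adj E a z \<longrightarrow> z = w \<or> terminal V E z))
                  \<and> (card Q = 1 \<longrightarrow> (\<forall>b \<in> Q. \<forall>z. adj E b z \<longrightarrow> z = w \<or> initial V E z))
                  \<and> (card P > 1 \<longrightarrow> (\<forall>a \<in> P. \<forall>z. adj E a z \<longrightarrow> z = w))
                  \<and> (card Q > 1 \<longrightarrow> (\<forall>b \<in> Q. \<forall>z. adj E b z \<longrightarrow> z = w)))))))"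
proof -
  have "edge_maximal x y n E \<longleftrightarrow> extremal_shape x y n V E"
    using edge_maximal_iff_defects_le_2[OF assms(4,5,1,2)]
      card_defects_le_2_if_extremal_shape[OF assms(4)] extremal_shape_if_defects_le_2[OF assms(4,5)]
    by blast
  then show ?thesis
    unfolding edge_maximal_def extremal_shape_def bipolar_component_def hub_component_def .
qed

end
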